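(* Let $n$ be even and $k\in\mathbb N$. Let $G$ be the graph on vertex set $V=\{0,\dots,n-1\}\times\{1,\dots,k\}$ in which $(u,i)$ and $(v,j)$ are adjacent iff $v\equiv u\pm1\pmod n$, together with one additional edge $e^*$ between $(0,1)$ and $(n/2,1)$. Define $x_0\in\mathbb R^V$ by $x_0(u,i)=\min(u,n-u)$ and, for $w\in\{0,\dots,n-1\}$, $x_w(u,i)=x_0((u-w)\bmod n,\ i)$; let $X=\sum_{w=0}^{n-1}x_wx_w^\top$. Then every vertex of $G$ has degree at least $2k$ and the minimum cut of $G$ is $2k$; all diagonal entries of $X$ are equal to a common value $D>0$, so $\hat X=X/D$ is symmetric positive semidefinite with unit diagonal; $\langle X,L_{e^*}\rangle=2\sum_{w=0}^{n/2-1}(\frac n2-2w)^2=\Theta(n^3)$; and $\langle X,L_{G\setminus e^*}\rangle=n^2k^2$. Consequently, if $k=o(\sqrt n)$, then $\langle\hat X,L_{e^*}\rangle\ge(1-o(1))\langle\hat X,L_G\rangle$, and for any $\eta\in(0,1)$ and $H$ a random subgraph of $G$ keeping each edge independently with probability $\eta$, with probability at least $\eta$ we have $\langle\hat X,L_H\rangle\ge(1-o(1))\langle\hat X,L_G\rangle$.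
   Context: $L_G$ denotes the unnormalized Laplacian $D_G-A_G$; for a single edge $e=\{a,b\}$, $L_e=(e_a-e_b)(e_a-e_b)^\top$; $G\setminus e^*$ is $G$ with the edge $e^*$ removed; $\langle A,B\rangle=\mathrm{tr}(A^\top B)$. Asymptotics are as $n\to\infty$. *)

theory Defs
  imports "HOL-Probability.Probability" "HOL-Library.Landau_Symbols"
begin

type_synonym vtx = "nat \<times> nat"

definition cverts :: "nat \<Rightarrow> nat \<Rightarrow> vtx set" where
  "cverts n k = {0..<n} \<times> {1..k}"

definition cadj :: "nat \<Rightarrow> vtx \<Rightarrow> vtx \<Rightarrow> bool" where
  "cadj n p q = (int (fst q) mod int n = (int (fst p) + 1) mod int n \<or>
                 int (fst q) mod int n = (int (fst p) - 1) mod int n)"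

definition estar :: "nat \<Rightarrow> vtx set" where
  "estar n = {(0, 1), (n div 2, 1)}"

definition ring_edges :: "nat \<Rightarrow> nat \<Rightarrow> vtx set set" where
  "ring_edges n k = {{p, q} | p q. p \<in> cverts n k \<and> q \<in> cverts n k \<and> cadj n p q}"

definition G_edges :: "nat \<Rightarrow> nat \<Rightarrow> vtx set set" where
  "G_edges n k = insert (estar n) (ring_edges n k)"

definition deg :: "'v set set \<Rightarrow> 'v \<Rightarrow> nat" where
  "deg E v = card {e \<in> E. v \<in> e}"

definition cut_size :: "'v set set \<Rightarrow> 'v set \<Rightarrow> nat" where
  "cut_size E S = card {e \<in> E. e \<inter> S \<noteq> {} \<and> \<not> e \<subseteq> S}"

definition min_cut :: "'v set \<Rightarrow> 'v set set \<Rightarrow> nat" where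
  "min_cut V E = Min (cut_size E ` {S. S \<subseteq> V \<and> S \<noteq> {} \<and> S \<noteq> V})"

definition lap :: "'v set set \<Rightarrow> 'v \<Rightarrow> 'v \<Rightarrow> real" where
  "lap E p q = (if p = q then real (deg E p) else 0) - (if {p, q} \<in> E then 1 else 0)"

definition ind :: "'v \<Rightarrow> 'v \<Rightarrow> real" where
  "ind a p = (if p = a then 1 else 0)"

definition lap_edge :: "'v \<Rightarrow> 'v \<Rightarrow> 'v \<Rightarrow> 'v \<Rightarrow> real" where
  "lap_edge a b p q = (ind a p - ind b p) * (ind a q - ind b q)"

definition inner_mat :: "'v set \<Rightarrow> ('v \<Rightarrow> 'v \<Rightarrow> real) \<Rightarrow> ('v \<Rightarrow> 'v \<Rightarrow> real) \<Rightarrow> real" where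
  "inner_mat V A B = (\<Sum>p\<in>V. \<Sum>q\<in>V. A p q * B p q)"

definition psd :: "'v set \<Rightarrow> ('v \<Rightarrow> 'v \<Rightarrow> real) \<Rightarrow> bool" where
  "psd V A = ((\<forall>p\<in>V. \<forall>q\<in>V. A p q = A q p) \<and>
              (\<forall>z :: 'v \<Rightarrow> real. (\<Sum>p\<in>V. \<Sum>q\<in>V. z p * A p q * z q) \<ge> 0))"

definition x0 :: "nat \<Rightarrow> vtx \<Rightarrow> real" where
  "x0 n p = real (min (fst p) (n - fst p))"

definition xvec :: "nat \<Rightarrow> nat \<Rightarrow> vtx \<Rightarrow> real" where
  "xvec n w p = x0 n (nat ((int (fst p) - int w) mod int n), snd p)"

definition Xmat :: "nat \<Rightarrow> vtx \<Rightarrow> vtx \<Rightarrow> real" where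
  "Xmat n p q = (\<Sum>w<n. xvec n w p * xvec n w q)"

text \<open>The common diagonal value D (read off at vertex (0,1)) and X-hat = X / D.\<close>
definition Dval :: "nat \<Rightarrow> real" where
  "Dval n = Xmat n (0, 1) (0, 1)"

definition Xhat :: "nat \<Rightarrow> vtx \<Rightarrow> vtx \<Rightarrow> real" where
  "Xhat n p q = Xmat n p q / Dval n"

definition evenF :: "nat filter" where
  "evenF = inf at_top (principal {n. even n})"

end

theory Submission
  imports Defs
begin

(* Every shifted tent vector x_w changes by exactly 1 along each ring edge, so each of the n k^2
   ring edges has weight <X, L_e> = n and the ring contributes n^2 k^2, while across the antipodal
   edge e* the x_w differ by about |n/2 - 2w|, giving a weight of order n^3. Hence for
   k = o(sqrt n) the single edge e* carries almost all of <X, L_G>, and so does every subgraph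
   containing e*, which a random subgraph does with probability eta. The diagonal of X is
   constant because the x_w run through all cyclic shifts of x_0, and X is a Gram matrix.
   A nontrivial cut either splits a fibre {u} x {1..k}, and then each of the 2k common
   neighbours of the fibre yields a cut edge, or is a union of fibres, and then the ring
   crosses it at least twice with k edges each. *)

section \<open>Cuts and Laplacians of edge sets\<close>

definition simple_edges :: "'v set \<Rightarrow> 'v set set \<Rightarrow> bool" where
  "simple_edges V E \<longleftrightarrow> (\<forall>e\<in>E. \<exists>a\<in>V. \<exists>b\<in>V. a \<noteq> b \<and> e = {a, b})"

lemma simple_edges_subset: "simple_edges V E \<Longrightarrow> F \<subseteq> E \<Longrightarrow> simple_edges V F"
  unfolding simple_edges_def by blast

lemma deg_eq_card_adjacent:
  assumes "simple_edges V E" "p \<in> V"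
  shows "deg E p = card {q \<in> V. {p, q} \<in> E}"
proof -
  have "{e \<in> E. p \<in> e} = (\<lambda>q. {p, q}) ` {q \<in> V. {p, q} \<in> E}"
    using assms by (fastforce simp: simple_edges_def insert_commute)
  moreover have "inj_on (\<lambda>q. {p, q}) {q \<in> V. {p, q} \<in> E}"
    by (auto simp: inj_on_def doubleton_eq_iff)
  ultimately show ?thesis
    unfolding deg_def by (simp add: card_image)
qed

lemma cut_size_singleton:
  assumes "simple_edges V E"
  shows "cut_size E {v} = deg E v"
proof -
  have "{e \<in> E. e \<inter> {v} \<noteq> {} \<and> \<not> e \<subseteq> {v}} = {e \<in> E. v \<in> e}"
    using assms by (auto simp: simple_edges_def)
  then show ?thesis
    unfolding cut_size_def deg_def by simp
qed

lemma cut_size_mono: "E \<subseteq> F \<Longrightarrow> finite F \<Longrightarrow> cut_size E S \<le> cut_size F S"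
  unfolding cut_size_def by (intro card_mono) auto

lemma card_le_cut_size:
  assumes "finite E" "inj_on f A" "f ` A \<subseteq> {e \<in> E. e \<inter> S \<noteq> {} \<and> \<not> e \<subseteq> S}"
  shows "card A \<le> cut_size E S"
proof -
  have "card A = card (f ` A)"
    using assms(2) by (simp add: card_image)
  also have "\<dots> \<le> cut_size E S"
    unfolding cut_size_def using assms(1,3) by (intro card_mono) auto
  finally show ?thesis .
qed

definition edge_form :: "('v \<Rightarrow> 'v \<Rightarrow> real) \<Rightarrow> 'v \<Rightarrow> 'v \<Rightarrow> real" where
  "edge_form A a b = A a a - A a b - A b a + A b b"

lemma edge_form_commute: "edge_form A a b = edge_form A b a"
  unfolding edge_form_def by simp

lemma edge_form_gram:
  "edge_form (\<lambda>p q. \<Sum>w\<in>W. x w p * x w q) a b = (\<Sum>w\<in>W. (x w a - x w b)\<^sup>2)"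
  unfolding edge_form_def
  by (simp add: power2_eq_square sum_subtractf[symmetric] sum.distrib[symmetric] algebra_simps)

lemma inner_mat_add:
  "inner_mat V A (\<lambda>p q. B p q + C p q) = inner_mat V A B + inner_mat V A C"
  unfolding inner_mat_def by (simp add: distrib_left sum.distrib)

lemma inner_mat_divide:
  "inner_mat V (\<lambda>p q. A p q / c) B = inner_mat V A B / c"
  unfolding inner_mat_def by (simp add: sum_divide_distrib)

lemma inner_mat_lap_edge:
  assumes "finite V" "a \<in> V" "b \<in> V"
  shows "inner_mat V A (lap_edge a b) = edge_form A a b"
proof -
  have pick: "(\<Sum>q\<in>V. f q * ind c q) = f c" if "c \<in> V" for f and c
    using assms(1) that unfolding ind_def by (simp add: if_distrib cong: if_cong)
  have row: "(\<Sum>q\<in>V. A p q * lap_edge a b p q) = (A p a - A p b) * (ind a p - ind b p)" for p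
  proof -
    have "A p q * lap_edge a b p q
        = ((ind a p - ind b p) * A p q) * ind a q - ((ind a p - ind b p) * A p q) * ind b q" for q
      unfolding lap_edge_def by (simp add: algebra_simps)
    then have "(\<Sum>q\<in>V. A p q * lap_edge a b p q)
        = (\<Sum>q\<in>V. ((ind a p - ind b p) * A p q) * ind a q)
          - (\<Sum>q\<in>V. ((ind a p - ind b p) * A p q) * ind b q)"
      by (simp only: sum_subtractf[symmetric])
    then show ?thesis
      by (simp only: pick[OF assms(2)] pick[OF assms(3)]) (simp add: algebra_simps)
  qed
  have "inner_mat V A (lap_edge a b)
      = (\<Sum>p\<in>V. (A p a - A p b) * ind a p - (A p a - A p b) * ind b p)"
    unfolding inner_mat_def row by (simp add: algebra_simps)
  also have "\<dots> = edge_form A a b"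
    unfolding sum_subtractf pick[OF assms(2)] pick[OF assms(3)] edge_form_def by simp
  finally show ?thesis .
qed

lemma psd_imp_edge_form_nonneg:
  assumes "finite V" "psd V A" "a \<in> V" "b \<in> V"
  shows "0 \<le> edge_form A a b"
proof -
  define z where "z p = ind a p - ind b p" for p
  have "edge_form A a b = (\<Sum>p\<in>V. \<Sum>q\<in>V. z p * A p q * z q)"
    unfolding inner_mat_lap_edge[OF assms(1,3,4), symmetric] inner_mat_def lap_edge_def z_def
    by (simp add: mult_ac)
  then show ?thesis
    using assms(2) unfolding psd_def by simp
qed

lemma inner_mat_lap:
  assumes "finite V" "simple_edges V E"
  shows "inner_mat V A (lap E)
    = (\<Sum>p\<in>V. \<Sum>q\<in>V. if {p, q} \<in> E then edge_form A p q else 0) / 2"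
proof -
  define T where "T = (\<Sum>p\<in>V. \<Sum>q\<in>V. if {p, q} \<in> E then A p p - A p q else 0)"
  have row: "(\<Sum>q\<in>V. A p q * lap E p q) = (\<Sum>q\<in>V. if {p, q} \<in> E then A p p - A p q else 0)"
    if "p \<in> V" for p
  proof -
    have "A p q * lap E p q = (if q = p then A p p * real (deg E p) else 0) - (if {p, q} \<in> E then A p q else 0)" for q
      unfolding lap_def by (simp add: right_diff_distrib)
    then have "(\<Sum>q\<in>V. A p q * lap E p q) = A p p * real (deg E p) - (\<Sum>q\<in>V. if {p, q} \<in> E then A p q else 0)"
      using assms(1) that by (simp add: sum_subtractf)
    also have "real (deg E p) = (\<Sum>q\<in>V. if {p, q} \<in> E then 1 else 0)"
      using deg_eq_card_adjacent[OF assms(2) that] assms(1) by (simp add: sum.inter_filter[symmetric])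
    finally show ?thesis
      by (simp add: sum_distrib_left sum_subtractf[symmetric] if_distrib cong: if_cong)
  qed
  have "T = (\<Sum>p\<in>V. \<Sum>q\<in>V. if {p, q} \<in> E then A q q - A q p else 0)"
    unfolding T_def by (subst sum.swap) (simp add: insert_commute)
  then have "2 * T = (\<Sum>p\<in>V. \<Sum>q\<in>V. if {p, q} \<in> E then (A p p - A p q) + (A q q - A q p) else 0)"
    unfolding mult_2 by (subst (1) T_def) (simp add: sum.distrib[symmetric] if_distrib cong: if_cong)
  also have "\<dots> = (\<Sum>p\<in>V. \<Sum>q\<in>V. if {p, q} \<in> E then edge_form A p q else 0)"
    unfolding edge_form_def by (intro sum.cong refl) simp
  moreover have "inner_mat V A (lap E) = T"
    unfolding inner_mat_def T_def using row by simp
  ultimately show ?thesis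
    by simp
qed

lemma inner_mat_lap_nonneg:
  assumes "finite V" "simple_edges V E" "psd V A"
  shows "0 \<le> inner_mat V A (lap E)"
  unfolding inner_mat_lap[OF assms(1,2)]
  using psd_imp_edge_form_nonneg[OF assms(1,3)] by (simp add: sum_nonneg)

lemma lap_insert:
  assumes "finite E" "{a, b} \<notin> E" "a \<noteq> b"
  shows "lap (insert {a, b} E) = (\<lambda>p q. lap E p q + lap_edge a b p q)"
proof (intro ext)
  fix p q
  have "{e \<in> insert {a, b} E. p \<in> e} = (if p = a \<or> p = b then insert {a, b} else id) {e \<in> E. p \<in> e}"
    by auto
  then have "deg (insert {a, b} E) p = deg E p + (if p = a \<or> p = b then 1 else 0)"
    unfolding deg_def using assms(1,2) by simp
  then show "lap (insert {a, b} E) p q = lap E p q + lap_edge a b p q"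
    using assms(2,3) unfolding lap_def lap_edge_def ind_def by (auto simp: doubleton_eq_iff insert_commute)
qed

lemma psd_gram: "psd V (\<lambda>p q. \<Sum>w\<in>W. x w p * x w q)"
  unfolding psd_def
proof (intro conjI ballI allI)
  fix z :: "'a \<Rightarrow> real"
  have "(\<Sum>p\<in>V. \<Sum>q\<in>V. z p * (\<Sum>w\<in>W. x w p * x w q) * z q)
      = (\<Sum>p\<in>V. \<Sum>q\<in>V. \<Sum>w\<in>W. (z p * x w p) * (z q * x w q))"
    by (simp add: sum_distrib_left sum_distrib_right mult_ac)
  also have "\<dots> = (\<Sum>p\<in>V. \<Sum>w\<in>W. \<Sum>q\<in>V. (z p * x w p) * (z q * x w q))"
    by (intro sum.cong refl) (rule sum.swap)
  also have "\<dots> = (\<Sum>w\<in>W. \<Sum>p\<in>V. \<Sum>q\<in>V. (z p * x w p) * (z q * x w q))"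
    by (rule sum.swap)
  also have "\<dots> = (\<Sum>w\<in>W. (\<Sum>p\<in>V. z p * x w p)\<^sup>2)"
    by (simp add: power2_eq_square sum_product)
  finally show "0 \<le> (\<Sum>p\<in>V. \<Sum>q\<in>V. z p * (\<Sum>w\<in>W. x w p * x w q) * z q)"
    by (simp add: sum_nonneg)
qed (simp add: mult.commute)

lemma psd_divide: "psd V A \<Longrightarrow> 0 \<le> c \<Longrightarrow> psd V (\<lambda>p q. A p q / c)"
  unfolding psd_def by (simp add: sum_divide_distrib[symmetric] mult.assoc times_divide_eq_left)

section \<open>Degrees and minimum cut of G\<close>

lemma cadj_iff_succ:
  "cadj n p q \<longleftrightarrow> int (fst q) mod int n = (int (fst p) + 1) mod int n \<or>
                   int (fst p) mod int n = (int (fst q) + 1) mod int n"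
proof -
  have "b mod int n = (a - 1) mod int n \<longleftrightarrow> a mod int n = (b + 1) mod int n" for a b :: int
    by (metis add_diff_cancel_right' diff_add_cancel mod_add_left_eq mod_diff_left_eq)
  then show ?thesis
    unfolding cadj_def by blast
qed

lemma cadj_sym: "cadj n p q \<longleftrightarrow> cadj n q p"
  unfolding cadj_iff_succ by blast

lemma cadj_irrefl: "2 \<le> n \<Longrightarrow> \<not> cadj n p p"
  unfolding cadj_iff_succ by (auto simp: mod_eq_dvd_iff)

lemma cadj_Suc_mod: "cadj n (u, i) (Suc u mod n, j)"
  unfolding cadj_def by (simp add: zmod_int ac_simps)

lemma cadj_iff:
  assumes "0 < n" "fst q < n"
  shows "cadj n p q \<longleftrightarrow> fst q = Suc (fst p) mod n \<or> fst q = (fst p + n - 1) mod n"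
proof -
  have "int (fst p + n - 1) = (int (fst p) - 1) + int n"
    using assms(1) by simp
  then have "(int (fst p) - 1) mod int n = int ((fst p + n - 1) mod n)"
    by (metis mod_add_self2 zmod_int)
  moreover have "(int (fst p) + 1) mod int n = int (Suc (fst p) mod n)"
    by (simp add: zmod_int ac_simps)
  ultimately show ?thesis
    using assms(2) unfolding cadj_def by (simp add: of_nat_eq_iff)
qed

lemma Suc_mod_neq_pred_mod:
  assumes "3 \<le> n" "u < n"
  shows "Suc u mod n \<noteq> (u + n - 1) mod n"
  using assms by (cases "Suc u = n"; cases u) (auto simp: mod_if)

lemma Suc_Suc_mod_neq:
  assumes "3 \<le> n" "u < n"
  shows "Suc (Suc u mod n) mod n \<noteq> u"
  using assms by (auto simp: mod_if)

lemma adjacent_cverts: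
  assumes "0 < n" "p \<in> cverts n k"
  shows "{q \<in> cverts n k. cadj n p q} = {Suc (fst p) mod n, (fst p + n - 1) mod n} \<times> {1..k}"
  using assms cadj_iff[OF assms(1)] unfolding cverts_def by auto

lemma card_adjacent_cverts:
  assumes "3 \<le> n" "p \<in> cverts n k"
  shows "card {q \<in> cverts n k. cadj n p q} = 2 * k"
proof -
  have "fst p < n"
    using assms(2) unfolding cverts_def by auto
  then show ?thesis
    using assms Suc_mod_neq_pred_mod[OF assms(1)]
    by (simp add: adjacent_cverts card_cartesian_product)
qed

lemma ring_edges_iff:
  assumes "p \<in> cverts n k" "q \<in> cverts n k"
  shows "{p, q} \<in> ring_edges n k \<longleftrightarrow> cadj n p q"
proof
  assume "{p, q} \<in> ring_edges n k"
  then obtain p' q' where "{p, q} = {p', q'}" "cadj n p' q'"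
    unfolding ring_edges_def by blast
  then show "cadj n p q"
    by (auto simp: doubleton_eq_iff cadj_sym)
qed (use assms in \<open>unfold ring_edges_def, blast\<close>)

lemma finite_cverts: "finite (cverts n k)"
  unfolding cverts_def by simp

lemma card_cverts: "card (cverts n k) = n * k"
  unfolding cverts_def by (simp add: card_cartesian_product)

lemma finite_ring_edges: "finite (ring_edges n k)"
proof -
  have "ring_edges n k \<subseteq> (\<lambda>(p, q). {p, q}) ` (cverts n k \<times> cverts n k)"
    unfolding ring_edges_def by auto
  then show ?thesis
    using finite_cverts by (meson finite_SigmaI finite_imageI finite_subset)
qed

lemma finite_G_edges: "finite (G_edges n k)"
  unfolding G_edges_def using finite_ring_edges by simp

lemma simple_ring_edges:
  assumes "2 \<le> n"
  shows "simple_edges (cverts n k) (ring_edges n k)"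
  unfolding simple_edges_def
proof
  fix e
  assume "e \<in> ring_edges n k"
  then obtain p q where "e = {p, q}" "p \<in> cverts n k" "q \<in> cverts n k" "cadj n p q"
    unfolding ring_edges_def by blast
  moreover have "p \<noteq> q"
    using cadj_irrefl[OF assms] \<open>cadj n p q\<close> by blast
  ultimately show "\<exists>a\<in>cverts n k. \<exists>b\<in>cverts n k. a \<noteq> b \<and> e = {a, b}"
    by blast
qed

lemma estar_vertices:
  assumes "4 \<le> n" "1 \<le> k"
  shows "(0, 1) \<in> cverts n k" "(n div 2, 1) \<in> cverts n k" "(0::nat, 1::nat) \<noteq> (n div 2, 1)"
  using assms unfolding cverts_def by auto

lemma estar_notin_ring_edges:
  assumes "4 \<le> n" "1 \<le> k"
  shows "estar n \<notin> ring_edges n k"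
proof
  assume "estar n \<in> ring_edges n k"
  then have "cadj n (0, 1) (n div 2, 1)"
    using ring_edges_iff estar_vertices[OF assms] unfolding estar_def by blast
  moreover have "n div 2 \<noteq> Suc 0 mod n" "n div 2 \<noteq> (n - 1) mod n"
    using assms(1) by auto
  ultimately show False
    using assms(1) cadj_iff[of n "(n div 2, 1)" "(0, 1)"] by simp
qed

lemma G_edges_minus_estar: "4 \<le> n \<Longrightarrow> 1 \<le> k \<Longrightarrow> G_edges n k - {estar n} = ring_edges n k"
  using estar_notin_ring_edges unfolding G_edges_def by auto

lemma simple_G_edges:
  assumes "4 \<le> n" "1 \<le> k"
  shows "simple_edges (cverts n k) (G_edges n k)"
proof -
  have "\<exists>a\<in>cverts n k. \<exists>b\<in>cverts n k. a \<noteq> b \<and> estar n = {a, b}"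
    using estar_vertices[OF assms] unfolding estar_def by blast
  then show ?thesis
    using simple_ring_edges[of n k] assms unfolding G_edges_def simple_edges_def by auto
qed

lemma deg_ring_edges:
  assumes "3 \<le> n" "p \<in> cverts n k"
  shows "deg (ring_edges n k) p = 2 * k"
proof -
  have "{q \<in> cverts n k. {p, q} \<in> ring_edges n k} = {q \<in> cverts n k. cadj n p q}"
    using ring_edges_iff assms(2) by blast
  then show ?thesis
    using deg_eq_card_adjacent[OF simple_ring_edges assms(2)] card_adjacent_cverts[OF assms] assms(1)
    by simp
qed

lemma deg_G_edges_ge:
  assumes "4 \<le> n" "p \<in> cverts n k"
  shows "2 * k \<le> deg (G_edges n k) p"
proof -
  have "deg (ring_edges n k) p \<le> deg (G_edges n k) p"
    unfolding deg_def G_edges_def using finite_G_edges[unfolded G_edges_def]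
    by (intro card_mono) auto
  then show ?thesis
    using deg_ring_edges[OF _ assms(2)] assms(1) by simp
qed

lemma cyclic_transition:
  assumes "u0 < n" "P u0" "u1 < n" "\<not> P u1"
  shows "\<exists>u<n. P u \<and> \<not> P (Suc u mod n)"
proof (rule ccontr)
  assume "\<not> ?thesis"
  then have step: "P u \<Longrightarrow> P (Suc u mod n)" if "u < n" for u
    using that by blast
  have "P ((u0 + m) mod n)" for m
  proof (induction m)
    case (Suc m)
    then show ?case
      using step[of "(u0 + m) mod n"] assms(1) by (simp add: mod_Suc_eq)
  qed (use assms(1,2) in simp)
  from this[of "u1 + n - u0"] show False
    using assms by simp
qed

lemma ring_cut_ge_if_fibre_split:
  assumes "3 \<le> n" "(u, i) \<in> cverts n k" "(u, j) \<in> cverts n k" "(u, i) \<in> S" "(u, j) \<notin> S"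
  shows "2 * k \<le> cut_size (ring_edges n k) S"
proof -
  define a b where "a = (u, i)" and "b = (u, j)"
  define N where "N = {w \<in> cverts n k. cadj n a w}"
  define f where "f w = (if w \<in> S then {w, b} else {w, a})" for w
  have N: "w \<in> cverts n k" "cadj n w a" "cadj n w b" "w \<noteq> a" "w \<noteq> b" if "w \<in> N" for w
  proof -
    show "w \<in> cverts n k" "cadj n w a"
      using that cadj_sym unfolding N_def by auto
    then show "cadj n w b"
      unfolding a_def b_def cadj_def by simp
    show "w \<noteq> a"
      using \<open>cadj n w a\<close> cadj_irrefl[of n a] assms(1) by auto
    show "w \<noteq> b"
      using \<open>cadj n w b\<close> cadj_irrefl[of n b] assms(1) by auto
  qed
  \<comment> \<open>every common neighbour of (u,i) and (u,j) sees a cut edge towards one of them\<close>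
  have "f ` N \<subseteq> {e \<in> ring_edges n k. e \<inter> S \<noteq> {} \<and> \<not> e \<subseteq> S}"
    using N ring_edges_iff assms(2-5) unfolding f_def a_def b_def by auto
  moreover have "inj_on f N"
    using N unfolding inj_on_def f_def by (auto simp: doubleton_eq_iff)
  ultimately have "card N \<le> cut_size (ring_edges n k) S"
    using card_le_cut_size[OF finite_ring_edges] by blast
  then show ?thesis
    using card_adjacent_cverts[OF assms(1,2)] unfolding N_def a_def by simp
qed

lemma ring_cut_ge_if_fibres_whole:
  assumes "3 \<le> n" "S \<subseteq> cverts n k" "p \<in> S" "q \<in> cverts n k" "q \<notin> S"
    and whole: "\<And>u i j. (u, i) \<in> cverts n k \<Longrightarrow> (u, j) \<in> cverts n k \<Longrightarrow>
      (u, i) \<in> S \<longleftrightarrow> (u, j) \<in> S"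
  shows "2 * k \<le> cut_size (ring_edges n k) S"
proof -
  define P where "P u \<longleftrightarrow> (u, 1) \<in> S" for u
  have in_V: "(u, j) \<in> cverts n k \<longleftrightarrow> u < n \<and> j \<in> {1..k}" for u j
    by (simp add: cverts_def)
  have "1 \<le> k"
    using assms(2,3) unfolding cverts_def by auto
  then have fibre: "u < n \<Longrightarrow> j \<in> {1..k} \<Longrightarrow> (u, j) \<in> S \<longleftrightarrow> P u" for u j
    using whole[of u j 1] unfolding P_def in_V by auto
  have p: "fst p < n" "snd p \<in> {1..k}" and q: "fst q < n" "snd q \<in> {1..k}"
    using assms(2-4) unfolding cverts_def by auto
  then have "P (fst p)" "\<not> P (fst q)"
    using fibre[of "fst p" "snd p"] fibre[of "fst q" "snd q"] assms(3,5) by auto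
  \<comment> \<open>going once around the cycle, the fibres must leave S somewhere and re-enter it somewhere\<close>
  then obtain u1 u2 where u1: "u1 < n" "P u1" "\<not> P (Suc u1 mod n)"
    and u2: "u2 < n" "\<not> P u2" "P (Suc u2 mod n)"
    using cyclic_transition[of "fst p" n P "fst q"] cyclic_transition[of "fst q" n "Not \<circ> P" "fst p"] p q
    by auto
  define h :: "vtx \<Rightarrow> vtx set" where "h = (\<lambda>(u, j). {(u, j), (Suc u mod n, j)})"
  have "h (u, j) \<in> {e \<in> ring_edges n k. e \<inter> S \<noteq> {} \<and> \<not> e \<subseteq> S}"
    if "u \<in> {u1, u2}" "j \<in> {1..k}" for u j
  proof -
    have "u < n" "Suc u mod n < n" "P u \<noteq> P (Suc u mod n)"
      using that(1) u1 u2 assms(1) by auto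
    then have "(u, j) \<in> cverts n k" "(Suc u mod n, j) \<in> cverts n k"
      "((u, j) \<in> S) \<noteq> ((Suc u mod n, j) \<in> S)"
      using fibre[of u j] fibre[of "Suc u mod n" j] that(2) unfolding in_V by auto
    then show ?thesis
      using ring_edges_iff cadj_Suc_mod unfolding h_def by auto
  qed
  then have cut: "h ` ({u1, u2} \<times> {1..k}) \<subseteq> {e \<in> ring_edges n k. e \<inter> S \<noteq> {} \<and> \<not> e \<subseteq> S}"
    by auto
  have inj: "inj_on h ({u1, u2} \<times> {1..k})"
    using u1 u2 Suc_Suc_mod_neq[OF assms(1)] unfolding inj_on_def h_def
    by (auto simp: doubleton_eq_iff)
  have "card ({u1, u2} \<times> {1..k}) \<le> cut_size (ring_edges n k) S"
    by (rule card_le_cut_size[OF finite_ring_edges inj cut])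
  moreover have "card ({u1, u2} \<times> {1..k}) = 2 * k"
    using u1(2) u2(2) by (cases "u1 = u2") (auto simp: card_cartesian_product)
  ultimately show ?thesis
    by linarith
qed

lemma ring_cut_ge:
  assumes "3 \<le> n" "S \<subseteq> cverts n k" "S \<noteq> {}" "S \<noteq> cverts n k"
  shows "2 * k \<le> cut_size (ring_edges n k) S"
proof (cases "\<exists>u i j. (u, i) \<in> cverts n k \<and> (u, j) \<in> cverts n k \<and> (u, i) \<in> S \<and> (u, j) \<notin> S")
  case True
  then obtain u i j where "(u, i) \<in> cverts n k" "(u, j) \<in> cverts n k" "(u, i) \<in> S" "(u, j) \<notin> S"
    by blast
  then show ?thesis
    by (rule ring_cut_ge_if_fibre_split[OF assms(1)])
next
  case False
  then have whole: "(u, i) \<in> S \<longleftrightarrow> (u, j) \<in> S"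
    if "(u, i) \<in> cverts n k" "(u, j) \<in> cverts n k" for u i j
    using that by blast
  obtain p q where "p \<in> S" "q \<in> cverts n k" "q \<notin> S"
    using assms(2-4) by blast
  then show ?thesis
    by (rule ring_cut_ge_if_fibres_whole[OF assms(1,2) _ _ _ whole])
qed

lemma min_cut_G_edges:
  assumes "4 \<le> n" "1 \<le> k"
  shows "min_cut (cverts n k) (G_edges n k) = 2 * k"
  unfolding min_cut_def
proof (rule Min_eqI)
  show "finite (cut_size (G_edges n k) ` {S. S \<subseteq> cverts n k \<and> S \<noteq> {} \<and> S \<noteq> cverts n k})"
    using finite_cverts by simp
next
  fix c
  assume "c \<in> cut_size (G_edges n k) ` {S. S \<subseteq> cverts n k \<and> S \<noteq> {} \<and> S \<noteq> cverts n k}"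
  then obtain S where "S \<subseteq> cverts n k" "S \<noteq> {}" "S \<noteq> cverts n k" "c = cut_size (G_edges n k) S"
    by blast
  moreover have "cut_size (ring_edges n k) S \<le> cut_size (G_edges n k) S"
    unfolding G_edges_def by (rule cut_size_mono) (use finite_G_edges[unfolded G_edges_def] in auto)
  ultimately show "2 * k \<le> c"
    using ring_cut_ge[of n S k] assms(1) by simp
next
  have v: "(1, 1) \<in> cverts n k" "(0, 1) \<in> cverts n k"
    using assms unfolding cverts_def by auto
  have "(1, 1) \<notin> estar n"
    using assms(1) unfolding estar_def by auto
  then have "{e \<in> G_edges n k. (1, 1) \<in> e} = {e \<in> ring_edges n k. (1, 1) \<in> e}"
    unfolding G_edges_def by auto
  then have "cut_size (G_edges n k) {(1, 1)} = 2 * k"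
    using cut_size_singleton[OF simple_G_edges[OF assms]] deg_ring_edges[OF _ v(1)] assms(1)
    unfolding deg_def by simp
  moreover have "{(1, 1)} \<subseteq> cverts n k" "{(1, 1)} \<noteq> {}" "{(1, 1)} \<noteq> cverts n k"
    using v by auto
  ultimately show "2 * k \<in> cut_size (G_edges n k) ` {S. S \<subseteq> cverts n k \<and> S \<noteq> {} \<and> S \<noteq> cverts n k}"
    by (metis (mono_tags, lifting) image_eqI mem_Collect_eq)
qed

section \<open>The matrix X\<close>

definition cycle_dist :: "nat \<Rightarrow> nat \<Rightarrow> real" where
  "cycle_dist n t = real (min t (n - t))"

definition residue :: "nat \<Rightarrow> int \<Rightarrow> nat" where
  "residue n a = nat (a mod int n)"

lemma xvec_eq: "xvec n w p = cycle_dist n (residue n (int (fst p) - int w))"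
  by (simp add: xvec_def x0_def cycle_dist_def residue_def)

lemma residue_less: "0 < n \<Longrightarrow> residue n a < n"
  unfolding residue_def by (simp add: nat_less_iff)

lemma residue_of_nat: "t < n \<Longrightarrow> residue n (int t) = t"
  unfolding residue_def by (simp add: zmod_int)

lemma residue_add_1:
  assumes "0 < n"
  shows "residue n (a + 1) = Suc (residue n a) mod n"
proof -
  have "int (Suc (residue n a) mod n) = (a mod int n + 1) mod int n"
    using assms unfolding residue_def by (simp add: zmod_int ac_simps)
  also have "\<dots> = (a + 1) mod int n"
    by (simp add: mod_add_left_eq)
  finally show ?thesis
    unfolding residue_def by (metis nat_int)
qed

lemma sum_residue_reflect:
  assumes "0 < n"
  shows "(\<Sum>w<n. g (residue n (c - int w))) = (\<Sum>t<n. g t)"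
proof -
  have inv: "residue n (c - int (residue n (c - int t))) = t" if "t < n" for t
  proof -
    have "int (residue n (c - int t)) = (c - int t) mod int n"
      using assms unfolding residue_def by simp
    then have "residue n (c - int (residue n (c - int t))) = residue n (c - (c - int t))"
      unfolding residue_def by (simp add: mod_diff_right_eq)
    then show ?thesis
      using residue_of_nat[OF that] by simp
  qed
  show ?thesis
    by (rule sum.reindex_bij_witness[of _ "\<lambda>t. residue n (c - int t)" "\<lambda>t. residue n (c - int t)"])
      (use inv residue_less[OF assms] in auto)
qed

lemma Xmat_diag: "0 < n \<Longrightarrow> Xmat n p p = (\<Sum>t<n. (cycle_dist n t)\<^sup>2)"
  unfolding Xmat_def xvec_eq
  using sum_residue_reflect[of n "\<lambda>t. (cycle_dist n t)\<^sup>2" "int (fst p)"]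
  by (simp add: power2_eq_square)

lemma Dval_eq: "0 < n \<Longrightarrow> Dval n = (\<Sum>t<n. (cycle_dist n t)\<^sup>2)"
  unfolding Dval_def by (rule Xmat_diag)

lemma Xmat_diag_eq_Dval: "0 < n \<Longrightarrow> Xmat n p p = Dval n"
  using Xmat_diag Dval_eq by simp

lemma Dval_pos:
  assumes "2 \<le> n"
  shows "0 < Dval n"
proof -
  have "0 < (\<Sum>t<n. (cycle_dist n t)\<^sup>2)"
    by (rule sum_pos2[of _ 1]) (use assms in \<open>auto simp: cycle_dist_def\<close>)
  then show ?thesis
    using Dval_eq assms by simp
qed

lemma Xhat_diag: "2 \<le> n \<Longrightarrow> Xhat n p p = 1"
  unfolding Xhat_def using Xmat_diag_eq_Dval[of n p] Dval_pos[of n] by simp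

lemma psd_Xhat: "psd V (Xhat n)"
proof -
  have "0 \<le> Dval n"
    unfolding Dval_def Xmat_def by (simp add: sum_nonneg)
  then have "psd V (\<lambda>p q. (\<Sum>w\<in>{..<n}. xvec n w p * xvec n w q) / Dval n)"
    by (intro psd_divide psd_gram)
  then show ?thesis
    unfolding Xhat_def[abs_def] Xmat_def by simp
qed

lemma edge_form_Xmat: "edge_form (Xmat n) p q = (\<Sum>w<n. (xvec n w p - xvec n w q)\<^sup>2)"
  unfolding Xmat_def[abs_def] by (rule edge_form_gram)

lemma cycle_dist_Suc_mod:
  assumes "even n" "t < n"
  shows "\<bar>cycle_dist n t - cycle_dist n (Suc t mod n)\<bar> = 1"
proof (cases "Suc t = n")
  case True
  moreover have "2 \<le> n"
    using assms True by presburger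
  ultimately show ?thesis
    unfolding cycle_dist_def by (auto simp: min_def)
next
  case False
  moreover have "Suc (2 * t) \<noteq> n"
    using assms(1) by auto
  ultimately show ?thesis
    using assms(2) unfolding cycle_dist_def by (auto simp: min_def of_nat_diff)
qed

lemma edge_form_Xmat_succ:
  assumes "even n" "0 < n" "int (fst q) mod int n = (int (fst p) + 1) mod int n"
  shows "edge_form (Xmat n) p q = real n"
proof -
  have "(xvec n w p - xvec n w q)\<^sup>2 = 1" for w
  proof -
    have "(int (fst q) - int w) mod int n = ((int (fst p) + 1) mod int n - int w) mod int n"
      using assms(3) by (metis mod_diff_left_eq)
    also have "\<dots> = ((int (fst p) - int w) + 1) mod int n"
      by (simp add: mod_diff_left_eq algebra_simps)
    finally have "residue n (int (fst q) - int w) = residue n ((int (fst p) - int w) + 1)"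
      unfolding residue_def by simp
    then have "residue n (int (fst q) - int w) = Suc (residue n (int (fst p) - int w)) mod n"
      using residue_add_1[OF assms(2)] by simp
    then have "\<bar>xvec n w p - xvec n w q\<bar> = 1"
      using cycle_dist_Suc_mod[OF assms(1) residue_less[OF assms(2)]] by (simp add: xvec_eq)
    then show ?thesis
      by (metis power2_abs power_one)
  qed
  then show ?thesis
    unfolding edge_form_Xmat by simp
qed

lemma edge_form_Xmat_adjacent:
  assumes "even n" "0 < n" "cadj n p q"
  shows "edge_form (Xmat n) p q = real n"
  using assms(3) edge_form_Xmat_succ[OF assms(1,2), of p q] edge_form_Xmat_succ[OF assms(1,2), of q p]
    edge_form_commute[of "Xmat n" p q]
  unfolding cadj_iff_succ by argo

lemma inner_Xmat_lap_ring_edges: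
  assumes "even n" "4 \<le> n"
  shows "inner_mat (cverts n k) (Xmat n) (lap (ring_edges n k)) = real n ^ 2 * real k ^ 2"
proof -
  have row: "(\<Sum>q\<in>cverts n k. if {p, q} \<in> ring_edges n k then edge_form (Xmat n) p q else 0)
      = real n * (2 * real k)" if "p \<in> cverts n k" for p
  proof -
    have "(\<Sum>q\<in>cverts n k. if {p, q} \<in> ring_edges n k then edge_form (Xmat n) p q else 0)
        = (\<Sum>q\<in>cverts n k. if cadj n p q then real n else 0)"
      using ring_edges_iff[OF that] edge_form_Xmat_adjacent[OF assms(1)] assms(2)
      by (intro sum.cong) auto
    also have "\<dots> = real n * real (card {q \<in> cverts n k. cadj n p q})"
      using finite_cverts by (simp add: sum.inter_filter[symmetric])
    finally show ?thesis
      using card_adjacent_cverts[OF _ that] assms(2) by simp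
  qed
  have "simple_edges (cverts n k) (ring_edges n k)"
    using simple_ring_edges assms(2) by simp
  then have "inner_mat (cverts n k) (Xmat n) (lap (ring_edges n k))
      = (\<Sum>p\<in>cverts n k. \<Sum>q\<in>cverts n k.
           if {p, q} \<in> ring_edges n k then edge_form (Xmat n) p q else 0) / 2"
    by (rule inner_mat_lap[OF finite_cverts])
  also have "\<dots> = (\<Sum>p\<in>cverts n k. real n * (2 * real k)) / 2"
    using row by simp
  finally show ?thesis
    by (simp add: card_cverts power2_eq_square)
qed

definition antipodal_energy :: "nat \<Rightarrow> real" where
  "antipodal_energy n = 2 * (\<Sum>w<n div 2. (real n / 2 - 2 * real w)\<^sup>2)"

lemma edge_form_Xmat_antipodal:
  assumes "even n" "0 < n"
  shows "edge_form (Xmat n) (0, i) (n div 2, j) = antipodal_energy n"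
proof -
  define m where "m = n div 2"
  have n: "n = m + m"
    using assms(1) unfolding m_def by auto
  define g where "g t = (cycle_dist n t - cycle_dist n (residue n (int t + int m)))\<^sup>2" for t
  have "(xvec n w (0, i) - xvec n w (m, j))\<^sup>2 = g (residue n (0 - int w))" for w
  proof -
    have "residue n (int (residue n (0 - int w)) + int m) = residue n (int m - int w)"
      using assms(2) unfolding residue_def by (simp add: mod_add_left_eq)
    then show ?thesis
      unfolding g_def xvec_eq by simp
  qed
  then have "edge_form (Xmat n) (0, i) (m, j) = (\<Sum>t<n. g t)"
    unfolding edge_form_Xmat using sum_residue_reflect[OF assms(2), of g 0] by simp
  \<comment> \<open>for t < m the two entries are t and m - t, for t = m + s they are m - s and s\<close>
  also have "\<dots> = (\<Sum>t<m. g t) + (\<Sum>t<m. g (m + t))"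
  proof -
    have "(\<Sum>t<m + b. g t) = (\<Sum>t<m. g t) + (\<Sum>t<b. g (m + t))" for b
      by (induction b) (simp_all add: ac_simps)
    then show ?thesis
      unfolding n by simp
  qed
  also have "(\<Sum>t<m. g t) = (\<Sum>t<m. (real m - 2 * real t)\<^sup>2)"
  proof (intro sum.cong refl)
    fix t
    assume "t \<in> {..<m}"
    moreover from this have "residue n (int t + int m) = t + m"
      using residue_of_nat[of "t + m" n] n by simp
    ultimately show "g t = (real m - 2 * real t)\<^sup>2"
      unfolding g_def cycle_dist_def using n by (simp add: power2_commute)
  qed
  also have "(\<Sum>t<m. g (m + t)) = (\<Sum>t<m. (real m - 2 * real t)\<^sup>2)"
  proof (intro sum.cong refl)
    fix t
    assume "t \<in> {..<m}"
    moreover from this have "residue n (int (m + t) + int m) = t"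
      using residue_of_nat[of t n] n unfolding residue_def by simp
    ultimately show "g (m + t) = (real m - 2 * real t)\<^sup>2"
      unfolding g_def cycle_dist_def using n by (simp add: power2_commute)
  qed
  finally show ?thesis
    unfolding antipodal_energy_def m_def[symmetric] n by simp
qed

lemma G_edges_eq_insert:
  "G_edges n k = insert {(0, 1), (n div 2, 1)} (ring_edges n k)"
  unfolding G_edges_def estar_def ..

lemma inner_Xmat_lap_estar:
  assumes "even n" "4 \<le> n" "1 \<le> k"
  shows "inner_mat (cverts n k) (Xmat n) (lap_edge (0, 1) (n div 2, 1)) = antipodal_energy n"
  using inner_mat_lap_edge[OF finite_cverts estar_vertices(1,2)[OF assms(2,3)]]
    edge_form_Xmat_antipodal[OF assms(1)] assms(2) by simp

lemma inner_Xmat_lap_G_edges: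
  assumes "even n" "4 \<le> n" "1 \<le> k"
  shows "inner_mat (cverts n k) (Xmat n) (lap (G_edges n k)) = antipodal_energy n + real n ^ 2 * real k ^ 2"
proof -
  have "lap (G_edges n k) = (\<lambda>p q. lap (ring_edges n k) p q + lap_edge (0, 1) (n div 2, 1) p q)"
    unfolding G_edges_eq_insert using estar_notin_ring_edges[OF assms(2,3)] estar_vertices(3)[OF assms(2,3)]
    by (intro lap_insert finite_ring_edges) (simp_all add: estar_def)
  then show ?thesis
    using inner_Xmat_lap_ring_edges[OF assms(1,2)] inner_Xmat_lap_estar[OF assms]
    by (simp add: inner_mat_add)
qed

lemma inner_mat_Xhat: "inner_mat V (Xhat n) B = inner_mat V (Xmat n) B / Dval n"
  unfolding Xhat_def[abs_def] by (rule inner_mat_divide)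

section \<open>Asymptotics\<close>

lemma sum_lessThan_of_nat: "(\<Sum>w<m. real w) = real m * (real m - 1) / 2"
  by (induction m) (simp_all add: field_simps)

lemma sum_lessThan_of_nat_squared:
  "(\<Sum>w<m. (real w)\<^sup>2) = real m * (real m - 1) * (2 * real m - 1) / 6"
  by (induction m) (simp_all add: field_simps power2_eq_square)

lemma sum_centred_squares: "(\<Sum>w<m. (real m - 2 * real w)\<^sup>2) = (real m ^ 3 + 2 * real m) / 3"
proof -
  have "(\<Sum>w<m. (real m - 2 * real w)\<^sup>2)
      = (\<Sum>w<m. (real m)\<^sup>2 - 4 * real m * real w + 4 * (real w)\<^sup>2)"
    by (intro sum.cong refl) (simp add: power2_eq_square algebra_simps)
  also have "\<dots> = real m * (real m)\<^sup>2 - 4 * real m * (\<Sum>w<m. real w) + 4 * (\<Sum>w<m. (real w)\<^sup>2)"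
    by (simp add: sum.distrib sum_subtractf sum_distrib_left)
  finally show ?thesis
    unfolding sum_lessThan_of_nat sum_lessThan_of_nat_squared
    by (simp add: field_simps power2_eq_square power3_eq_cube)
qed

lemma antipodal_energy_eq:
  assumes "even n"
  shows "antipodal_energy n = real n ^ 3 / 12 + 2 * real n / 3"
proof -
  obtain m where n: "n = 2 * m"
    using assms by (elim evenE)
  then have "antipodal_energy n = 2 * (\<Sum>w<m. (real m - 2 * real w)\<^sup>2)"
    unfolding antipodal_energy_def by simp
  then show ?thesis
    unfolding sum_centred_squares n by (simp add: field_simps power3_eq_cube)
qed

lemma antipodal_energy_nonneg: "0 \<le> antipodal_energy n"
  unfolding antipodal_energy_def by (simp add: sum_nonneg)

lemma eventually_evenF: "(\<And>n. N \<le> n \<Longrightarrow> even n \<Longrightarrow> P n) \<Longrightarrow> eventually P evenF"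
  unfolding evenF_def eventually_inf_principal eventually_at_top_linorder by auto

lemma antipodal_energy_bigtheta: "antipodal_energy \<in> \<Theta>[evenF](\<lambda>n. real n ^ 3)"
proof (rule bigthetaI'[of "1 / 12" 1])
  show "\<forall>\<^sub>F n in evenF. 1 / 12 * norm (real n ^ 3) \<le> norm (antipodal_energy n)
                       \<and> norm (antipodal_energy n) \<le> 1 * norm (real n ^ 3)"
  proof (rule eventually_evenF)
    fix n :: nat
    assume "1 \<le> n" "even n"
    then have "real n \<le> real n ^ 3" "antipodal_energy n = real n ^ 3 / 12 + 2 * real n / 3"
      using power_increasing[of 1 3 "real n"] antipodal_energy_eq by simp_all
    then have "1 / 12 * real n ^ 3 \<le> antipodal_energy n \<and> antipodal_energy n \<le> 1 * real n ^ 3"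
      using of_nat_0_le_iff[of n] by linarith
    then show "1 / 12 * norm (real n ^ 3) \<le> norm (antipodal_energy n)
               \<and> norm (antipodal_energy n) \<le> 1 * norm (real n ^ 3)"
      using antipodal_energy_nonneg[of n] by simp
  qed
qed simp_all

(* the fraction of <X, L_G> carried by the ring edges, i.e. by G without e_star *)
definition ring_fraction :: "nat \<Rightarrow> nat \<Rightarrow> real" where
  "ring_fraction n k = real n ^ 2 * real k ^ 2 / (antipodal_energy n + real n ^ 2 * real k ^ 2)"

lemma ring_fraction_share:
  assumes "even n" "4 \<le> n" "1 \<le> k"
  shows "(1 - ring_fraction n k) * inner_mat (cverts n k) (Xhat n) (lap (G_edges n k))
       = inner_mat (cverts n k) (Xhat n) (lap_edge (0, 1) (n div 2, 1))"
proof -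
  define A R where "A = antipodal_energy n" and "R = real n ^ 2 * real k ^ 2"
  have "0 < A + R"
    using antipodal_energy_eq[OF assms(1)] assms(2) unfolding A_def R_def by (simp add: add_pos_nonneg)
  then have "1 - R / (A + R) = A / (A + R)"
    by (simp add: field_simps)
  moreover have "A / (A + R) * ((A + R) / Dval n) = A / Dval n"
    using \<open>0 < A + R\<close> by simp
  ultimately show ?thesis
    unfolding inner_mat_Xhat inner_Xmat_lap_G_edges[OF assms] inner_Xmat_lap_estar[OF assms]
      ring_fraction_def A_def R_def
    by simp
qed

lemma ring_fraction_bounds:
  assumes "even n" "1 \<le> n"
  shows "0 \<le> ring_fraction n k \<and> ring_fraction n k \<le> 12 * (real k ^ 2 / real n)"
proof -
  have A: "real n ^ 3 / 12 \<le> antipodal_energy n" "0 < real n ^ 3 / 12"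
    using antipodal_energy_eq[OF assms(1)] assms(2) by simp_all
  moreover have "real n ^ 3 / 12 \<le> antipodal_energy n + real n ^ 2 * real k ^ 2"
    using A(1) by (simp add: add_increasing2)
  ultimately have "ring_fraction n k \<le> real n ^ 2 * real k ^ 2 / (real n ^ 3 / 12)"
    unfolding ring_fraction_def by (intro frac_le) simp_all
  also have "\<dots> = 12 * (real k ^ 2 / real n)"
    using assms(2) by (simp add: field_simps power2_eq_square power3_eq_cube)
  moreover have "0 \<le> ring_fraction n k"
    unfolding ring_fraction_def using antipodal_energy_nonneg[of n] by simp
  ultimately show ?thesis
    by simp
qed

lemma ring_fraction_tendsto_0:
  assumes "(\<lambda>n. real (kk n)) \<in> o[evenF](\<lambda>n. sqrt (real n))"
  shows "((\<lambda>n. ring_fraction n (kk n)) \<longlongrightarrow> 0) evenF"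
proof (rule tendsto_sandwich[of "\<lambda>_. 0" _ _ "\<lambda>n. 12 * (real (kk n) ^ 2 / real n)"])
  have "(\<lambda>n. real (kk n) ^ 2) \<in> o[evenF](\<lambda>n. sqrt (real n) ^ 2)"
    by (rule landau_o.small_power[OF assms]) simp
  then have "(\<lambda>n. real (kk n) ^ 2) \<in> o[evenF](\<lambda>n. real n)"
    by simp
  then show "((\<lambda>n. 12 * (real (kk n) ^ 2 / real n)) \<longlongrightarrow> 0) evenF"
    by (intro tendsto_mult_right_zero smalloD_tendsto)
  show "\<forall>\<^sub>F n in evenF. 0 \<le> ring_fraction n (kk n)"
    "\<forall>\<^sub>F n in evenF. ring_fraction n (kk n) \<le> 12 * (real (kk n) ^ 2 / real n)"
    using ring_fraction_bounds by (auto intro: eventually_evenF[of 1])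
qed simp

lemma inner_Xhat_lap_estar_le:
  assumes "4 \<le> n" "1 \<le> k" "H \<subseteq> G_edges n k" "estar n \<in> H"
  shows "inner_mat (cverts n k) (Xhat n) (lap_edge (0, 1) (n div 2, 1)) \<le> inner_mat (cverts n k) (Xhat n) (lap H)"
proof -
  have "simple_edges (cverts n k) (H - {estar n})"
    by (rule simple_edges_subset[OF simple_G_edges[OF assms(1,2)]]) (use assms(3) in auto)
  then have "0 \<le> inner_mat (cverts n k) (Xhat n) (lap (H - {estar n}))"
    using inner_mat_lap_nonneg[OF finite_cverts _ psd_Xhat] by blast
  moreover have "lap (insert {(0, 1), (n div 2, 1)} (H - {estar n}))
      = (\<lambda>p q. lap (H - {estar n}) p q + lap_edge (0, 1) (n div 2, 1) p q)"
    using finite_subset[OF assms(3) finite_G_edges] estar_vertices(3)[OF assms(1,2)]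
    by (intro lap_insert) (simp_all add: estar_def)
  moreover have "insert {(0, 1), (n div 2, 1)} (H - {estar n}) = H"
    using assms(4) unfolding estar_def by auto
  ultimately show ?thesis
    by (simp add: inner_mat_add)
qed

lemma prob_Pi_bernoulli_component:
  assumes "finite E" "x \<in> E" "0 \<le> p" "p \<le> 1"
  shows "measure_pmf.prob (Pi_pmf E False (\<lambda>_. bernoulli_pmf p)) {f. f x} = p"
proof -
  have "measure_pmf.prob (Pi_pmf E False (\<lambda>_. bernoulli_pmf p)) {f. f x}
      = measure_pmf.prob (map_pmf (\<lambda>f. f x) (Pi_pmf E False (\<lambda>_. bernoulli_pmf p))) {True}"
    by (simp add: vimage_def)
  also have "\<dots> = p"
    using assms by (simp add: Pi_pmf_component measure_pmf_single)
  finally show ?thesis .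
qed

lemma random_subgraph_dominates:
  assumes "even n" "4 \<le> n" "1 \<le> k" "0 \<le> \<eta>" "\<eta> \<le> 1"
  shows "\<eta> \<le> measure_pmf.prob (Pi_pmf (G_edges n k) False (\<lambda>_. bernoulli_pmf \<eta>))
           {f. (1 - ring_fraction n k) * inner_mat (cverts n k) (Xhat n) (lap (G_edges n k))
               \<le> inner_mat (cverts n k) (Xhat n) (lap {e \<in> G_edges n k. f e})}"
    (is "_ \<le> measure_pmf.prob ?M ?good")
proof -
  have "{f. f (estar n)} \<subseteq> ?good"
  proof safe
    fix f :: "vtx set \<Rightarrow> bool"
    assume "f (estar n)"
    then have "estar n \<in> {e \<in> G_edges n k. f e}"
      by (simp add: G_edges_def)
    then show "(1 - ring_fraction n k) * inner_mat (cverts n k) (Xhat n) (lap (G_edges n k))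
               \<le> inner_mat (cverts n k) (Xhat n) (lap {e \<in> G_edges n k. f e})"
      using ring_fraction_share[OF assms(1-3)] inner_Xhat_lap_estar_le[OF assms(2,3)] by simp
  qed
  then have "measure_pmf.prob ?M {f. f (estar n)} \<le> measure_pmf.prob ?M ?good"
    by (rule measure_pmf.finite_measure_mono) simp
  moreover have "measure_pmf.prob ?M {f. f (estar n)} = \<eta>"
    using assms(4,5) by (intro prob_Pi_bernoulli_component finite_G_edges) (simp add: G_edges_def)
  ultimately show ?thesis
    by simp
qed

lemma estar_dominates_G:
  assumes "\<forall>n. 1 \<le> kk n" "(\<lambda>n. real (kk n)) \<in> o[evenF](\<lambda>n. sqrt (real n))"
  shows "\<exists>\<epsilon> :: nat \<Rightarrow> real. (\<epsilon> \<longlongrightarrow> 0) evenF \<and>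
         (\<forall>\<^sub>F n in evenF.
            inner_mat (cverts n (kk n)) (Xhat n) (lap_edge (0, 1) (n div 2, 1))
            \<ge> (1 - \<epsilon> n) * inner_mat (cverts n (kk n)) (Xhat n) (lap (G_edges n (kk n))))"
  by (intro exI[of _ "\<lambda>n. ring_fraction n (kk n)"] conjI ring_fraction_tendsto_0[OF assms(2)]
      eventually_evenF[of 4])
    (use ring_fraction_share assms(1) in simp)

lemma random_subgraph_dominates_G:
  assumes "\<forall>n. 1 \<le> kk n" "(\<lambda>n. real (kk n)) \<in> o[evenF](\<lambda>n. sqrt (real n))" "0 < \<eta>" "\<eta> < 1"
  shows "\<exists>\<epsilon> :: nat \<Rightarrow> real. (\<epsilon> \<longlongrightarrow> 0) evenF \<and>
            (\<forall>\<^sub>F n in evenF.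
               measure_pmf.prob (Pi_pmf (G_edges n (kk n)) False (\<lambda>_. bernoulli_pmf \<eta>))
                 {f. inner_mat (cverts n (kk n)) (Xhat n) (lap {e \<in> G_edges n (kk n). f e})
                     \<ge> (1 - \<epsilon> n) * inner_mat (cverts n (kk n)) (Xhat n) (lap (G_edges n (kk n)))}
               \<ge> \<eta>)"
  by (intro exI[of _ "\<lambda>n. ring_fraction n (kk n)"] conjI ring_fraction_tendsto_0[OF assms(2)]
      eventually_evenF[of 4])
    (use random_subgraph_dominates assms(1,3,4) in simp)

theorem mainTheorem17:
  shows
  "(\<forall>n k. even n \<and> 4 \<le> n \<and> 1 \<le> k \<longrightarrow>
      (\<forall>v\<in>cverts n k. 2 * k \<le> deg (G_edges n k) v) \<and>
      min_cut (cverts n k) (G_edges n k) = 2 * k \<and>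
      (\<forall>v\<in>cverts n k. Xmat n v v = Dval n) \<and> Dval n > 0 \<and>
      psd (cverts n k) (Xhat n) \<and> (\<forall>v\<in>cverts n k. Xhat n v v = 1) \<and>
      inner_mat (cverts n k) (Xmat n) (lap_edge (0, 1) (n div 2, 1))
        = 2 * (\<Sum>w<n div 2. (real n / 2 - 2 * real w)^2) \<and>
      inner_mat (cverts n k) (Xmat n) (lap (G_edges n k - {estar n}))
        = real n ^ 2 * real k ^ 2)
   \<and> (\<lambda>n. 2 * (\<Sum>w<n div 2. (real n / 2 - 2 * real w)^2)) \<in> \<Theta>[evenF](\<lambda>n. real n ^ 3)
   \<and> (\<forall>kk :: nat \<Rightarrow> nat. (\<forall>n. 1 \<le> kk n) \<and>
        (\<lambda>n. real (kk n)) \<in> o[evenF](\<lambda>n. sqrt (real n)) \<longrightarrow>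
      (\<exists>\<epsilon> :: nat \<Rightarrow> real. (\<epsilon> \<longlongrightarrow> 0) evenF \<and>
         (\<forall>\<^sub>F n in evenF.
            inner_mat (cverts n (kk n)) (Xhat n) (lap_edge (0, 1) (n div 2, 1))
            \<ge> (1 - \<epsilon> n) * inner_mat (cverts n (kk n)) (Xhat n) (lap (G_edges n (kk n)))))
      \<and> (\<forall>\<eta>::real. 0 < \<eta> \<and> \<eta> < 1 \<longrightarrow>
          (\<exists>\<epsilon> :: nat \<Rightarrow> real. (\<epsilon> \<longlongrightarrow> 0) evenF \<and>
            (\<forall>\<^sub>F n in evenF.
               measure_pmf.prob (Pi_pmf (G_edges n (kk n)) False (\<lambda>_. bernoulli_pmf \<eta>))
                 {f. inner_mat (cverts n (kk n)) (Xhat n) (lap {e \<in> G_edges n (kk n). f e})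
                     \<ge> (1 - \<epsilon> n) * inner_mat (cverts n (kk n)) (Xhat n) (lap (G_edges n (kk n)))}
               \<ge> \<eta>))))"
  unfolding antipodal_energy_def[symmetric]
  \<comment> \<open>these rules go first: auto would rewrite the 1 :: nat in their goals to Suc 0\<close>
  by (intro conjI allI impI; (elim conjE)?;
      (rule estar_dominates_G random_subgraph_dominates_G inner_Xmat_lap_estar; assumption)?)
    (auto simp: deg_G_edges_ge min_cut_G_edges Xmat_diag_eq_Dval Dval_pos psd_Xhat Xhat_diag
      inner_Xmat_lap_ring_edges G_edges_minus_estar antipodal_energy_bigtheta)

end
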